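(* Let $R_1$ and $R_2$ be two bisimulations on the state space $E$ of a Feller-Dynkin process. Then the transitive closure $R$ of $R_1 \cup R_2$ is a bisimulation.
   Context: Let $E$ be a locally compact Hausdorff space with countable base, equipped with its Borel $\sigma$-algebra $\mathcal{E}$, and let $E_\partial = E \uplus \{\partial\}$ be its one-point compactification. A Feller-Dynkin semigroup is a strongly continuous semigroup $(\hat P_t)_{t\ge 0}$ of linear operators on $C_0(E)$ (continuous functions vanishing at infinity, sup norm) such that $0\le f\le 1$ implies $0\le \hat P_t f\le 1$; it determines sub-Markov kernels $P_t$ on $E$ with $\hat P_t f(x)=\int f(y)P_t(x,dy)$. A trajectory is a cadlag map $\omega:[0,\infty)\to E_\partial$ such that if $\omega(t-)=\partial$ or $\omega(t)=\partial$ then $\omega(u)=\partial$ for all $u\ge t$. Let $\Omega$ be the set of trajectories, $X_t(\omega)=\omega(t)$, $\mathcal{G}=\sigma(X_s : s\ge 0)$, and for $x\in E_\partial$ let $\mathbb{P}^x$ be the unique probability measure on $(\Omega,\mathcal{G})$ with $\mathbb{P}^x(X_0\in dx_0, X_{t_1}\in dx_1,\dots,X_{t_n}\in dx_n)=\delta_x(dx_0)P^{+\partial}_{t_1}(x_0,dx_1)\cdots P^{+\partial}_{t_n-t_{n-1}}(x_{n-1},dx_n)$ for all $0\le t_1\le\dots\le t_n$, where $P^{+\partial}_t$ extends $P_t$ to $E_\partial$ by $P^{+\partial}_t(x,\{\partial\})=1-P_t(x,E)$ and $P^{+\partial}_t(\partial,\{\partial\})=1$. The (Feller-Dynkin) process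 is also equipped with $obs:E\to 2^{AP}$ for a finite set $AP$ of atomic propositions, extended by $obs(\partial)=\partial$. An equivalence relation $R$ on $E$ is a bisimulation if whenever $x\,R\,y$: (i) $obs(x)=obs(y)$, and (ii) for every $R$-closed set $B\in\mathcal{G}$, $\mathbb{P}^x(B)=\mathbb{P}^y(B)$. Here $B$ is $R$-closed if for every $\omega\in B$ and every trajectory $\omega'$ with $\omega(t)\,R\,\omega'(t)$ for all $t\ge 0$ (the point $\partial$ being related to itself), we have $\omega'\in B$. *)

theory Defs
  imports "HOL-Probability.Probability"
begin

text \<open>E is a type 'a of class t2_space + second_countable_topology, assumed locally
  compact. E_partial is 'a option, with None playing the role of the cemetery point.\<close>

definition onepoint_open :: "'a::topological_space option set \<Rightarrow> bool" where
  "onepoint_open U \<longleftrightarrow>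
     (None \<notin> U \<and> open (Some -` U)) \<or>
     (None \<in> U \<and> open (Some -` U) \<and> compact (- (Some -` U)))"

definition onepoint_topology :: "'a::topological_space option topology" where
  "onepoint_topology = topology onepoint_open"

definition borelD :: "'a::topological_space option measure" where
  "borelD = sigma UNIV {U. openin onepoint_topology U}"

definition C0 :: "('a::topological_space \<Rightarrow> real) set" where
  "C0 = {f. continuous_on UNIV f \<and>
            (\<forall>e>0. \<exists>K. compact K \<and> (\<forall>x. x \<notin> K \<longrightarrow> \<bar>f x\<bar> < e))}"

definition sup_dist :: "('a \<Rightarrow> real) \<Rightarrow> ('a \<Rightarrow> real) \<Rightarrow> real" where
  "sup_dist f g = (SUP x. \<bar>f x - g x\<bar>)"

definition feller_dynkin_semigroup ::
  "(real \<Rightarrow> ('a::topological_space \<Rightarrow> real) \<Rightarrow> ('a \<Rightarrow> real)) \<Rightarrow> bool" where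
  "feller_dynkin_semigroup P \<longleftrightarrow>
     (\<forall>t\<ge>0. \<forall>f\<in>C0. P t f \<in> C0) \<and>
     (\<forall>t\<ge>0. \<forall>f\<in>C0. \<forall>g\<in>C0. \<forall>a b::real.
         P t (\<lambda>x. a * f x + b * g x) = (\<lambda>x. a * P t f x + b * P t g x)) \<and>
     (\<forall>f\<in>C0. P 0 f = f) \<and>
     (\<forall>s\<ge>0. \<forall>t\<ge>0. \<forall>f\<in>C0. P (s + t) f = P s (P t f)) \<and>
     (\<forall>f\<in>C0. ((\<lambda>t. sup_dist (P t f) f) \<longlongrightarrow> 0) (at_right 0)) \<and>
     (\<forall>t\<ge>0. \<forall>f\<in>C0. (\<forall>x. 0 \<le> f x \<and> f x \<le> 1) \<longrightarrow> (\<forall>x. 0 \<le> P t f x \<and> P t f x \<le> 1))"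

definition determines_kernels ::
  "(real \<Rightarrow> ('a::topological_space \<Rightarrow> real) \<Rightarrow> ('a \<Rightarrow> real)) \<Rightarrow> (real \<Rightarrow> 'a \<Rightarrow> 'a measure) \<Rightarrow> bool" where
  "determines_kernels P K \<longleftrightarrow>
     (\<forall>t\<ge>0. \<forall>x. sets (K t x) = sets borel \<and> subprob_space (K t x) \<and>
        (\<forall>f\<in>C0. P t f x = (\<integral>y. f y \<partial>K t x)))"

definition trajectories :: "(real \<Rightarrow> 'a::topological_space option) set" where
  "trajectories = {\<omega>. \<omega> \<in> extensional {0..} \<and>
      (\<forall>t\<ge>0. limitin onepoint_topology \<omega> (\<omega> t) (at_right t)) \<and>
      (\<forall>t>0. \<exists>l. limitin onepoint_topology \<omega> l (at_left t)) \<and>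
      (\<forall>t\<ge>0. (\<omega> t = None \<or> (t > 0 \<and> limitin onepoint_topology \<omega> None (at_left t)))
               \<longrightarrow> (\<forall>u\<ge>t. \<omega> u = None))}"

definition path_space :: "(real \<Rightarrow> 'a::topological_space option) measure" where
  "path_space = sigma trajectories
     {{\<omega>\<in>trajectories. \<omega> t \<in> A} | t A. t \<ge> 0 \<and> A \<in> sets borelD}"

text \<open>Finite-dimensional distributions built from the extended kernels P^{+\<partial>}.
  A list [(d1,A1),...,(dn,An)] encodes times t_i = d1+...+di and sets A_i.\<close>
fun fdd :: "(real \<Rightarrow> 'a \<Rightarrow> 'a measure) \<Rightarrow> 'a option \<Rightarrow> (real \<times> 'a option set) list \<Rightarrow> ennreal" where
  "fdd K x [] = 1"
| "fdd K None ((s, A) # L) = indicator A None * fdd K None L"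
| "fdd K (Some a) ((s, A) # L) =
     (\<integral>\<^sup>+ y. indicator A (Some y) * fdd K (Some y) L \<partial>K s a)
     + (1 - emeasure (K s a) (space (K s a))) * indicator A None * fdd K None L"

definition time_of :: "(real \<times> 'b) list \<Rightarrow> nat \<Rightarrow> real" where
  "time_of L i = (\<Sum>j\<le>i. fst (L ! j))"

definition process_laws ::
  "(real \<Rightarrow> 'a::topological_space \<Rightarrow> 'a measure) \<Rightarrow> ('a option \<Rightarrow> (real \<Rightarrow> 'a option) measure) \<Rightarrow> bool" where
  "process_laws K Px \<longleftrightarrow>
     (\<forall>x. prob_space (Px x) \<and> space (Px x) = trajectories \<and> sets (Px x) = sets path_space \<and>
        (\<forall>A0 L. A0 \<in> sets borelD \<longrightarrow> (\<forall>(d, A)\<in>set L. d \<ge> 0 \<and> A \<in> sets borelD) \<longrightarrow>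
           emeasure (Px x) {\<omega>\<in>trajectories. \<omega> 0 \<in> A0 \<and>
                              (\<forall>i<length L. \<omega> (time_of L i) \<in> snd (L ! i))}
           = indicator A0 x * fdd K x L))"

definition feller_dynkin_process ::
  "(real \<Rightarrow> ('a::topological_space \<Rightarrow> real) \<Rightarrow> ('a \<Rightarrow> real)) \<Rightarrow> (real \<Rightarrow> 'a \<Rightarrow> 'a measure)
   \<Rightarrow> ('a option \<Rightarrow> (real \<Rightarrow> 'a option) measure) \<Rightarrow> bool" where
  "feller_dynkin_process P K Px \<longleftrightarrow>
     feller_dynkin_semigroup P \<and> determines_kernels P K \<and> process_laws K Px"

definition lift_rel :: "('a \<times> 'a) set \<Rightarrow> 'a option \<Rightarrow> 'a option \<Rightarrow> bool" where
  "lift_rel R u v \<longleftrightarrow> (u = None \<and> v = None) \<or> (\<exists>a b. u = Some a \<and> v = Some b \<and> (a, b) \<in> R)"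

definition R_closed :: "('a::topological_space \<times> 'a) set \<Rightarrow> (real \<Rightarrow> 'a option) set \<Rightarrow> bool" where
  "R_closed R B \<longleftrightarrow>
     (\<forall>\<omega>\<in>B. \<forall>\<omega>'\<in>trajectories. (\<forall>t\<ge>0. lift_rel R (\<omega> t) (\<omega>' t)) \<longrightarrow> \<omega>' \<in> B)"

definition bisimulation ::
  "('a::topological_space \<Rightarrow> 'ap set) \<Rightarrow> ('a option \<Rightarrow> (real \<Rightarrow> 'a option) measure)
   \<Rightarrow> ('a \<times> 'a) set \<Rightarrow> bool" where
  "bisimulation obs Px R \<longleftrightarrow> equiv UNIV R \<and>
     (\<forall>(x, y)\<in>R. obs x = obs y \<and>
        (\<forall>B\<in>sets path_space. R_closed R B \<longrightarrow>
            measure (Px (Some x)) B = measure (Px (Some y)) B))"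

end

theory Submission
  imports Defs
begin

text \<open>Only the definition of a bisimulation matters.
  A set that is closed for the larger relation \<open>(R\<^sub>1 \<union> R\<^sub>2)\<^sup>+\<close> is closed for each \<open>R\<^sub>i\<close>,
  so \<open>x \<mapsto> \<P>\<^sup>x(B)\<close> and \<open>obs\<close> agree across every \<open>R\<^sub>1\<close>- and every \<open>R\<^sub>2\<close>-step, hence along
  every chain of such steps.\<close>

lemma lift_rel_mono: "S \<subseteq> T \<Longrightarrow> lift_rel S u v \<Longrightarrow> lift_rel T u v"
  unfolding lift_rel_def by blast

lemma R_closed_antimono: "S \<subseteq> T \<Longrightarrow> R_closed T B \<Longrightarrow> R_closed S B"
  unfolding R_closed_def using lift_rel_mono by blast

lemma equiv_trancl_Un:
  assumes "equiv UNIV R1" and "equiv UNIV R2"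
  shows "equiv UNIV ((R1 \<union> R2)\<^sup>+)"
proof (rule equivI)
  show "(R1 \<union> R2)\<^sup>+ \<subseteq> UNIV \<times> UNIV" by simp
  show "refl ((R1 \<union> R2)\<^sup>+)"
    using assms by (metis equiv_def r_into_trancl' refl_on_def subset_UNIV UnCI)
  have "sym (R1 \<union> R2)" using assms by (simp add: equiv_def sym_Un)
  then show "sym ((R1 \<union> R2)\<^sup>+)" by (rule sym_trancl)
  show "trans ((R1 \<union> R2)\<^sup>+)" by (rule trans_trancl)
qed

lemma trancl_invariant:
  assumes "(x, y) \<in> S\<^sup>+" and "\<And>x y. (x, y) \<in> S \<Longrightarrow> f x = f y"
  shows "f x = f y"
  using assms(1) by (induction rule: trancl_induct) (auto dest: assms(2))

lemma bisimulation_obs_eq: "bisimulation obs Px S \<Longrightarrow> (x, y) \<in> S \<Longrightarrow> obs x = obs y"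
  unfolding bisimulation_def by blast

lemma bisimulation_measure_eq:
  assumes "bisimulation obs Px S" and "S \<subseteq> T" and "(x, y) \<in> S"
    and "B \<in> sets path_space" and "R_closed T B"
  shows "measure (Px (Some x)) B = measure (Px (Some y)) B"
  using assms R_closed_antimono[OF assms(2)] unfolding bisimulation_def by blast

lemma bisimulation_trancl_Un:
  assumes b1: "bisimulation obs Px R1" and b2: "bisimulation obs Px R2"
  shows "bisimulation obs Px ((R1 \<union> R2)\<^sup>+)"
proof -
  let ?R = "(R1 \<union> R2)\<^sup>+"
  have equiv: "equiv UNIV ?R"
    using b1 b2 equiv_trancl_Un unfolding bisimulation_def by blast
  have obs: "obs x = obs y" if "(x, y) \<in> ?R" for x y
    using that by (rule trancl_invariant) (use b1 b2 bisimulation_obs_eq in blast)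
  have measure: "measure (Px (Some x)) B = measure (Px (Some y)) B"
    if "(x, y) \<in> ?R" and B: "B \<in> sets path_space" "R_closed ?R B" for x y B
    using that(1)
  proof (rule trancl_invariant)
    fix u v assume "(u, v) \<in> R1 \<union> R2"
    moreover have "R1 \<subseteq> ?R" and "R2 \<subseteq> ?R" by auto
    ultimately show "measure (Px (Some u)) B = measure (Px (Some v)) B"
      using bisimulation_measure_eq[OF b1] bisimulation_measure_eq[OF b2] B by blast
  qed
  show ?thesis
    unfolding bisimulation_def using equiv obs measure by blast
qed

theorem mainTheorem1:
  fixes P :: "real \<Rightarrow> ('a::{t2_space, second_countable_topology} \<Rightarrow> real) \<Rightarrow> ('a \<Rightarrow> real)"
    and K :: "real \<Rightarrow> 'a \<Rightarrow> 'a measure"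
    and Px :: "'a option \<Rightarrow> (real \<Rightarrow> 'a option) measure"
    and obs :: "'a \<Rightarrow> 'ap::finite set"
    and R1 R2 :: "('a \<times> 'a) set"
  assumes "locally_compact_space (euclidean :: 'a topology)"
    and "feller_dynkin_process P K Px"
    and "bisimulation obs Px R1"
    and "bisimulation obs Px R2"
  shows "bisimulation obs Px ((R1 \<union> R2)\<^sup>+)"
  using assms(3,4) by (rule bisimulation_trancl_Un)

end
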